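(* Let $A\in\mathbb R^{m\times n}$, $b\in\mathbb R^m$, $c\in\mathbb R^n$ with $b>\mathbf 0$ and $c>\mathbf 0$, and let $(P)$: $\max c^\intercal x$ s.t. $Ax\le b$, $x\ge\mathbf 0$, with dual $(D)$: $\min b^\intercal y$ s.t. $A^\intercal y\ge c$, $y\ge\mathbf 0$. Consider the zero-sum game with the skew-symmetric $(m+n+1)\times(m+n+1)$ payoff matrix $$\begin{pmatrix}\mathbf 0 & A & -b\\ -A^\intercal & \mathbf 0 & c\\ b^\intercal & -c^\intercal & 0\end{pmatrix},$$ and let $(p^*,q^*,t^* )$ (with $p^*\in\mathbb R^m$, $q^*\in\mathbb R^n$, $t^*\in\mathbb R$) be a maximin strategy of the row player. Then: 1. If $t^*>0$, then $\left(\frac1{t^*}q^*,\frac1{t^*}p^*\right)$ is an optimal primal-dual pair for $(P,D)$. 2. If $t^*=0$, then $q^*$ is an unboundedness certificate for $(P)$.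
   Context: Inequalities are componentwise. In a zero-sum game with payoff matrix $N$, mixed strategies are probability vectors, the row player receives $p^\intercal Nq$, and a maximin strategy of the row player is a $p^*\in\arg\max_p\min_q p^\intercal Nq$. An optimal primal-dual pair is a primal feasible $x$ and dual feasible $y$ with $c^\intercal x=b^\intercal y$; an unboundedness certificate for $(P)$ is $w$ with $Aw\le\mathbf 0$, $w\ge\mathbf 0$, $c^\intercal w>0$. *)

theory Defs
  imports "HOL-Analysis.Analysis"
begin

text \<open>Index set of the game: rows/columns indexed by 'm + ('n + unit),
  i.e. m rows for p, n rows for q, and one row for t.\<close>

definition game_matrix ::
  "real^'n^'m \<Rightarrow> real^'m \<Rightarrow> real^'n \<Rightarrow> real^('m + ('n + unit))^('m + ('n + unit))" where
  "game_matrix A b c = (\<chi> r s.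
     (case r of
        Inl i \<Rightarrow> (case s of Inl i' \<Rightarrow> 0
                         | Inr (Inl j') \<Rightarrow> A $ i $ j'
                         | Inr (Inr _) \<Rightarrow> - b $ i)
      | Inr (Inl j) \<Rightarrow> (case s of Inl i' \<Rightarrow> - A $ i' $ j
                         | Inr (Inl j') \<Rightarrow> 0
                         | Inr (Inr _) \<Rightarrow> c $ j)
      | Inr (Inr _) \<Rightarrow> (case s of Inl i' \<Rightarrow> b $ i'
                         | Inr (Inl j') \<Rightarrow> - c $ j'
                         | Inr (Inr _) \<Rightarrow> 0)))"

definition mixed_strategy :: "real^'k \<Rightarrow> bool" where
  "mixed_strategy p \<longleftrightarrow> (\<forall>i. 0 \<le> p $ i) \<and> (\<Sum>i\<in>UNIV. p $ i) = 1"

definition game_payoff :: "real^'k^'k \<Rightarrow> real^'k \<Rightarrow> real^'k \<Rightarrow> real" where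
  "game_payoff N p q = p \<bullet> (N *v q)"

definition maximin_strategy :: "real^'k^'k \<Rightarrow> real^'k \<Rightarrow> bool" where
  "maximin_strategy N p \<longleftrightarrow> mixed_strategy p \<and>
     (\<forall>p'. mixed_strategy p' \<longrightarrow>
        (INF q\<in>{q. mixed_strategy q}. game_payoff N p' q)
          \<le> (INF q\<in>{q. mixed_strategy q}. game_payoff N p q))"

definition primal_feasible :: "real^'n^'m \<Rightarrow> real^'m \<Rightarrow> real^'n \<Rightarrow> bool" where
  "primal_feasible A b x \<longleftrightarrow> (\<forall>i. (A *v x) $ i \<le> b $ i) \<and> (\<forall>j. 0 \<le> x $ j)"

definition dual_feasible :: "real^'n^'m \<Rightarrow> real^'n \<Rightarrow> real^'m \<Rightarrow> bool" where
  "dual_feasible A c y \<longleftrightarrow> (\<forall>j. (transpose A *v y) $ j \<ge> c $ j) \<and> (\<forall>i. 0 \<le> y $ i)"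

definition optimal_primal_dual_pair ::
  "real^'n^'m \<Rightarrow> real^'m \<Rightarrow> real^'n \<Rightarrow> real^'n \<Rightarrow> real^'m \<Rightarrow> bool" where
  "optimal_primal_dual_pair A b c x y \<longleftrightarrow>
     primal_feasible A b x \<and> dual_feasible A c y \<and> c \<bullet> x = b \<bullet> y"

definition unboundedness_certificate :: "real^'n^'m \<Rightarrow> real^'n \<Rightarrow> real^'n \<Rightarrow> bool" where
  "unboundedness_certificate A c w \<longleftrightarrow>
     (\<forall>i. (A *v w) $ i \<le> 0) \<and> (\<forall>j. 0 \<le> w $ j) \<and> c \<bullet> w > 0"

end

theory Submission
  imports Defs
begin

(* The game is skew-symmetric, so its value is 0: separating 0 from the convex set
   N(simplex) + orthant yields a mixed strategy whose payoff against every column is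
   nonnegative, and a maximin strategy z must guarantee the same.  For z = (p, q, t) the
   three blocks of column inequalities read A q <= t b, A^T p >= t c and b.p <= c.q.
   For t > 0 these say (q/t, p/t) is feasible with no duality gap left by weak duality;
   for t = 0, positivity of b and c and (p, q) <> 0 force c.q > 0. *)

lemma vector_matrix_mult_skew:
  fixes N :: "real^'k^'k"
  assumes "transpose N = - N"
  shows "x v* N = - (N *v x)"
proof -
  have "x v* N = transpose N *v x" by simp
  also have "\<dots> = - (N *v x)"
    unfolding assms by (simp add: vec_eq_iff matrix_vector_mult_def sum_negf)
  finally show ?thesis .
qed

lemma skew_quadratic_form_eq_0:
  fixes N :: "real^'k^'k"
  assumes "transpose N = - N"
  shows "x \<bullet> (N *v x) = 0"
proof -
  have "x \<bullet> (N *v x) = (x v* N) \<bullet> x" by (rule dot_lmul_matrix[symmetric])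
  also have "\<dots> = - (x \<bullet> (N *v x))"
    by (simp add: vector_matrix_mult_skew[OF assms] inner_commute)
  finally show ?thesis by simp
qed

lemma mixed_strategy_le_1: "mixed_strategy p \<Longrightarrow> p $ i \<le> 1"
  unfolding mixed_strategy_def by (metis finite_class.finite_UNIV iso_tuple_UNIV_I member_le_sum)

lemma mixed_strategy_axis: "mixed_strategy (axis i (1::real))"
  unfolding mixed_strategy_def axis_def by (auto simp: sum.delta)

lemma mixed_strategy_normalize:
  fixes a :: "real^'k"
  assumes "\<forall>i. 0 \<le> a $ i" and "a \<noteq> 0"
  shows "mixed_strategy ((1 / (\<Sum>i\<in>UNIV. a $ i)) *\<^sub>R a)"
proof -
  obtain i where "a $ i \<noteq> 0" using assms(2) by (metis vec_eq_iff zero_index)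
  then have "0 < a $ i" using assms(1) by (simp add: order_less_le)
  also have "a $ i \<le> (\<Sum>i\<in>UNIV. a $ i)" by (rule member_le_sum) (use assms(1) in auto)
  finally show ?thesis
    using assms(1) by (simp add: mixed_strategy_def sum_divide_distrib[symmetric])
qed

lemma compact_mixed_strategies: "compact {p::real^'k. mixed_strategy p}"
proof (rule compact_eq_bounded_closed[THEN iffD2, OF conjI])
  show "bounded {p::real^'k. mixed_strategy p}"
    by (rule bounded_subset[OF bounded_cbox[of 0 1]])
       (auto simp: mem_box_cart mixed_strategy_le_1 mixed_strategy_def)
  have "{p::real^'k. mixed_strategy p} = (\<Inter>i. {p. 0 \<le> p $ i}) \<inter> {p. (\<Sum>i\<in>UNIV. p $ i) = 1}"
    unfolding mixed_strategy_def by auto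
  also have "closed \<dots>"
    by (intro closed_Int closed_INT ballI closed_Collect_le closed_Collect_eq continuous_intros)
  finally show "closed {p::real^'k. mixed_strategy p}" .
qed

lemma convex_mixed_strategies: "convex {p::real^'k. mixed_strategy p}"
  unfolding convex_def mixed_strategy_def
  by (auto simp: sum.distrib sum_distrib_left[symmetric])

lemma closed_nonneg_orthant: "closed {u::real^'k. \<forall>i. 0 \<le> u $ i}"
  by (simp add: Collect_all_eq closed_INT closed_Collect_le continuous_intros)

lemma convex_nonneg_orthant: "convex {u::real^'k. \<forall>i. 0 \<le> u $ i}"
  unfolding convex_def by auto

(* Ville's theorem of the alternative *)
lemma mixed_strategy_nonpos_or_separating:
  fixes N :: "real^'k^'l"
  obtains p where "mixed_strategy p" "\<forall>i. (N *v p) $ i \<le> 0"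
  | a where "\<forall>i. 0 \<le> a $ i" "\<forall>p. mixed_strategy p \<longrightarrow> 0 < a \<bullet> (N *v p)"
proof -
  define P where "P = (\<lambda>p. N *v p) ` {p. mixed_strategy p}"
  define U where "U = {u::real^'l. \<forall>i. 0 \<le> u $ i}"
  define S where "S = (\<Union>x\<in>P. \<Union>u\<in>U. {x + u})"
  show thesis
  proof (cases "0 \<in> S")
    case True
    then obtain p u where "mixed_strategy p" "\<forall>i. 0 \<le> u $ i" "N *v p + u = 0"
      unfolding S_def P_def U_def by auto
    then show thesis
      by (intro that(1)[of p]) (auto simp: vec_eq_iff add_eq_0_iff2)
  next
    case False
    have "closed S" unfolding S_def P_def U_def
      by (intro compact_closed_sums compact_continuous_image compact_mixed_strategies
          closed_nonneg_orthant continuous_intros)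
    moreover have "convex S" unfolding S_def P_def U_def
      by (intro convex_sums convex_linear_image convex_mixed_strategies convex_nonneg_orthant
          matrix_vector_mul_linear)
    ultimately obtain a e where "0 < e" and sep: "\<forall>x\<in>S. e < a \<bullet> x"
      using separating_hyperplane_closed_point[OF _ _ False] by auto
    have sep': "e < a \<bullet> (N *v p) + a \<bullet> u" if "mixed_strategy p" "\<forall>i. 0 \<le> u $ i" for p u
      using sep that unfolding S_def P_def U_def by (force simp: inner_add_right)
    have "0 \<le> a $ i" for i
    \<comment> \<open>otherwise adding a large multiple of axis i pushes a point of S below the hyperplane\<close>
    proof (rule ccontr)
      assume neg: "\<not> 0 \<le> a $ i"
      obtain p0 :: "real^'k" where p0: "mixed_strategy p0" using mixed_strategy_axis by blast
      define k where "k = \<bar>a \<bullet> (N *v p0)\<bar> / - (a $ i)"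
      have "e < a \<bullet> (N *v p0) + a \<bullet> (k *\<^sub>R axis i 1)"
        using neg by (intro sep' p0) (auto simp: k_def axis_def divide_nonneg_neg)
      also have "a \<bullet> (k *\<^sub>R axis i 1) = - \<bar>a \<bullet> (N *v p0)\<bar>"
        using neg by (simp add: inner_axis k_def)
      finally show False using \<open>0 < e\<close> by linarith
    qed
    moreover have "0 < a \<bullet> (N *v p)" if "mixed_strategy p" for p
      using sep'[OF that, of 0] \<open>0 < e\<close> by simp
    ultimately show thesis by (intro that(2)) auto
  qed
qed

lemma skew_symmetric_game_nonneg_strategy:
  fixes N :: "real^'k^'k"
  assumes skew: "transpose N = - N"
  obtains p where "mixed_strategy p" "\<forall>s. 0 \<le> (p v* N) $ s"
proof (cases rule: mixed_strategy_nonpos_or_separating[of N])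
  case (1 p)
  then show thesis by (intro that[of p]) (auto simp: vector_matrix_mult_skew[OF skew])
next
  case (2 a)
  have "a \<noteq> 0"
    using 2(2) mixed_strategy_axis by fastforce
  define \<sigma> where "\<sigma> = (\<Sum>i\<in>UNIV. a $ i)"
  have "0 < a \<bullet> (N *v ((1 / \<sigma>) *\<^sub>R a))"
    using 2 mixed_strategy_normalize[OF 2(1) \<open>a \<noteq> 0\<close>] unfolding \<sigma>_def by blast
  then show thesis
    by (simp add: matrix_vector_mult_scaleR skew_quadratic_form_eq_0[OF skew])
qed

lemma game_payoff_eq_inner: "game_payoff N p q = (p v* N) \<bullet> q"
  unfolding game_payoff_def by (rule dot_lmul_matrix[symmetric])

lemma bdd_below_game_payoffs: "bdd_below (game_payoff N p ` {q. mixed_strategy q})"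
  unfolding game_payoff_def
  by (intro bounded_imp_bdd_below compact_imp_bounded compact_continuous_image
      compact_mixed_strategies continuous_intros)

lemma guaranteed_payoff_nonneg_iff:
  "0 \<le> (INF q\<in>{q. mixed_strategy q}. game_payoff N p q) \<longleftrightarrow> (\<forall>s. 0 \<le> (p v* N) $ s)"
proof
  assume inf: "0 \<le> (INF q\<in>{q. mixed_strategy q}. game_payoff N p q)"
  show "\<forall>s. 0 \<le> (p v* N) $ s"
  proof
    fix s
    have "(INF q\<in>{q. mixed_strategy q}. game_payoff N p q) \<le> game_payoff N p (axis s 1)"
      by (intro cINF_lower bdd_below_game_payoffs) (simp add: mixed_strategy_axis)
    also have "\<dots> = (p v* N) $ s"
      by (simp add: game_payoff_eq_inner inner_axis)
    finally show "0 \<le> (p v* N) $ s" using inf by linarith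
  qed
next
  assume "\<forall>s. 0 \<le> (p v* N) $ s"
  then show "0 \<le> (INF q\<in>{q. mixed_strategy q}. game_payoff N p q)"
    using mixed_strategy_axis
    by (intro cINF_greatest)
       (auto simp: game_payoff_eq_inner inner_vec_def mixed_strategy_def intro!: sum_nonneg)
qed

lemma maximin_strategy_skew_symmetric_columns_nonneg:
  fixes N :: "real^'k^'k"
  assumes "transpose N = - N" and "maximin_strategy N z"
  shows "0 \<le> (z v* N) $ s"
proof -
  obtain p where p: "mixed_strategy p" "\<forall>s. 0 \<le> (p v* N) $ s"
    using skew_symmetric_game_nonneg_strategy[OF assms(1)] .
  have "0 \<le> (INF q\<in>{q. mixed_strategy q}. game_payoff N p q)"
    using p(2) by (simp add: guaranteed_payoff_nonneg_iff)
  also have "\<dots> \<le> (INF q\<in>{q. mixed_strategy q}. game_payoff N z q)"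
    using assms(2) p(1) unfolding maximin_strategy_def by blast
  finally show ?thesis by (simp add: guaranteed_payoff_nonneg_iff)
qed

lemma transpose_game_matrix: "transpose (game_matrix A b c) = - game_matrix A b c"
  by (simp add: vec_eq_iff transpose_def game_matrix_def split: sum.split)

lemma sum_game_index:
  fixes f :: "'m::finite + ('n::finite + unit) \<Rightarrow> real"
  shows "(\<Sum>r\<in>UNIV. f r) = (\<Sum>i\<in>UNIV. f (Inl i)) + (\<Sum>j\<in>UNIV. f (Inr (Inl j))) + f (Inr (Inr ()))"
  by (simp add: UNIV_Plus_UNIV[symmetric] sum.Plus UNIV_unit del: UNIV_Plus_UNIV)

lemma game_matrix_columns:
  fixes z :: "real^('m::finite + ('n::finite + unit))"
  defines "p \<equiv> (\<chi> i. z $ Inl i) :: real^'m"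
    and "q \<equiv> (\<chi> j. z $ Inr (Inl j)) :: real^'n"
    and "t \<equiv> z $ Inr (Inr ())"
  shows "(z v* game_matrix A b c) $ Inl i = t * b $ i - (A *v q) $ i"
    and "(z v* game_matrix A b c) $ Inr (Inl j) = (transpose A *v p) $ j - t * c $ j"
    and "(z v* game_matrix A b c) $ Inr (Inr ()) = c \<bullet> q - b \<bullet> p"
  by (simp_all add: vector_matrix_mult_def sum_game_index game_matrix_def matrix_vector_mult_def
      transpose_def inner_vec_def p_def q_def t_def sum_negf mult_ac)

lemma lp_weak_duality:
  assumes "primal_feasible A b x" and "dual_feasible A c y"
  shows "c \<bullet> x \<le> b \<bullet> y"
proof -
  have "c \<bullet> x \<le> (transpose A *v y) \<bullet> x"
    using assms unfolding primal_feasible_def dual_feasible_def inner_vec_def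
    by (intro sum_mono) (simp add: mult_right_mono)
  also have "\<dots> = y \<bullet> (A *v x)"
    by (simp add: dot_lmul_matrix)
  also have "\<dots> \<le> b \<bullet> y"
    using assms unfolding primal_feasible_def dual_feasible_def inner_vec_def
    by (intro sum_mono) (simp add: mult.commute[of "b $ _"] mult_left_mono)
  finally show ?thesis .
qed

lemma optimal_primal_dual_pair_scaleR:
  assumes "0 < t" and "\<forall>j. 0 \<le> q $ j" and "\<forall>i. 0 \<le> p $ i"
    and "\<forall>i. (A *v q) $ i \<le> t * b $ i" and "\<forall>j. t * c $ j \<le> (transpose A *v p) $ j"
    and "b \<bullet> p \<le> c \<bullet> q"
  shows "optimal_primal_dual_pair A b c ((1 / t) *\<^sub>R q) ((1 / t) *\<^sub>R p)"
proof -
  have primal: "primal_feasible A b ((1 / t) *\<^sub>R q)"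
    using assms unfolding primal_feasible_def
    by (auto simp: matrix_vector_mult_scaleR field_simps mult.commute)
  have dual: "dual_feasible A c ((1 / t) *\<^sub>R p)"
    using assms unfolding dual_feasible_def
    by (auto simp: matrix_vector_mult_scaleR field_simps mult.commute)
  have "b \<bullet> ((1 / t) *\<^sub>R p) \<le> c \<bullet> ((1 / t) *\<^sub>R q)"
    using assms by (simp add: divide_right_mono)
  then have "c \<bullet> ((1 / t) *\<^sub>R q) = b \<bullet> ((1 / t) *\<^sub>R p)"
    using lp_weak_duality[OF primal dual] by linarith
  with primal dual show ?thesis
    unfolding optimal_primal_dual_pair_def by blast
qed

lemma inner_pos_if_pos_nonneg:
  fixes c x :: "real^'k"
  assumes "\<forall>i. 0 < c $ i" and "\<forall>i. 0 \<le> x $ i" and "x \<noteq> 0"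
  shows "0 < c \<bullet> x"
proof -
  obtain i where "x $ i \<noteq> 0" using assms(3) by (metis vec_eq_iff zero_index)
  then have "0 < c $ i * x $ i" using assms(1,2) by (simp add: order_less_le)
  also have "\<dots> \<le> c \<bullet> x" unfolding inner_vec_def inner_real_def
    by (rule member_le_sum) (use assms(1,2) in \<open>auto intro: less_imp_le mult_nonneg_nonneg\<close>)
  finally show ?thesis .
qed

lemma unboundedness_certificate_if_nonzero:
  fixes A :: "real^'n^'m" and b p :: "real^'m" and c q :: "real^'n"
  assumes "\<forall>i. 0 < b $ i" and "\<forall>j. 0 < c $ j"
    and "\<forall>i. 0 \<le> p $ i" and "\<forall>j. 0 \<le> q $ j" and "p \<noteq> 0 \<or> q \<noteq> 0"
    and "\<forall>i. (A *v q) $ i \<le> 0" and "b \<bullet> p \<le> c \<bullet> q"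
  shows "unboundedness_certificate A c q"
proof -
  have "0 < c \<bullet> q"
  proof (cases "q = 0")
    case True
    then have "0 < b \<bullet> p" using assms by (intro inner_pos_if_pos_nonneg) auto
    then show ?thesis using assms(7) by linarith
  next
    case False
    then show ?thesis using assms by (intro inner_pos_if_pos_nonneg) auto
  qed
  then show ?thesis unfolding unboundedness_certificate_def using assms by simp
qed

theorem proposition4:
  fixes A :: "real^'n^'m" and b :: "real^'m" and c :: "real^'n"
    and z :: "real^('m + ('n + unit))"
  assumes b_pos: "\<forall>i. b $ i > 0"
    and c_pos: "\<forall>j. c $ j > 0"
    and maximin: "maximin_strategy (game_matrix A b c) z"
  defines "p \<equiv> (\<chi> i. z $ Inl i) :: real^'m"
    and "q \<equiv> (\<chi> j. z $ Inr (Inl j)) :: real^'n"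
    and "t \<equiv> z $ Inr (Inr ())"
  shows "(t > 0 \<longrightarrow> optimal_primal_dual_pair A b c ((1 / t) *\<^sub>R q) ((1 / t) *\<^sub>R p))
       \<and> (t = 0 \<longrightarrow> unboundedness_certificate A c q)"
proof -
  have columns: "0 \<le> (z v* game_matrix A b c) $ s" for s
    using maximin_strategy_skew_symmetric_columns_nonneg[OF transpose_game_matrix maximin] .
  have primal: "(A *v q) $ i \<le> t * b $ i" for i
    using columns[of "Inl i"] unfolding p_def q_def t_def game_matrix_columns by simp
  have dual: "t * c $ j \<le> (transpose A *v p) $ j" for j
    using columns[of "Inr (Inl j)"] unfolding p_def q_def t_def game_matrix_columns by simp
  have gap: "b \<bullet> p \<le> c \<bullet> q"
    using columns[of "Inr (Inr ())"] unfolding p_def q_def t_def game_matrix_columns by simp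
  have z_nonneg: "\<forall>r. 0 \<le> z $ r" and z_sum: "(\<Sum>r\<in>UNIV. z $ r) = 1"
    using maximin unfolding maximin_strategy_def mixed_strategy_def by auto
  then have nonneg: "\<forall>i. 0 \<le> p $ i" "\<forall>j. 0 \<le> q $ j" "0 \<le> t"
    by (simp_all add: p_def q_def t_def)
  have "(\<Sum>i\<in>UNIV. p $ i) + (\<Sum>j\<in>UNIV. q $ j) + t = 1"
    using z_sum unfolding sum_game_index[of "\<lambda>r. z $ r"] p_def q_def t_def by simp
  then have "t = 0 \<Longrightarrow> p \<noteq> 0 \<or> q \<noteq> 0" by auto
  with primal dual gap show ?thesis
    by (auto intro: optimal_primal_dual_pair_scaleR[OF _ nonneg(2,1)]
        unboundedness_certificate_if_nonzero[OF b_pos c_pos nonneg(1,2)])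
qed

end
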